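(* Let $p$ be a prime, let $n\geqslant 2$ be an integer, let $m\geqslant 0$ be an integer and let $k\geqslant 2$ be an integer not divisible by $p$. For positive integers $a,r$ let $w(a,r)=\frac{1}{r}\sum_{d\mid r}\mu(d)\,a^{r/d}$, where $\mu$ is the Möbius function. For $i=0,1,\dots,m$ define $$a_i = \frac{w(n,p^{m-i}k)^{p^i}}{p^i\, w(n,p^mk)}.$$ Suppose that $0 < s \leqslant i \leqslant m$. Then $$\frac{a_i}{a_{i-s}} \leqslant p^{-s}\left(\frac{2p^s}{(p^{m-i}k)^{p^s-1}}\right)^{p^{i-s}}.$$ *)

theory Defs
  imports "HOL-Computational_Algebra.Primes" "HOL-Computational_Algebra.Squarefree" Complex_Main
begin

definition moebius :: "nat \<Rightarrow> int" where
  "moebius d = (if squarefree d then (-1) ^ card (prime_factors d) else 0)"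

definition necklace_w :: "nat \<Rightarrow> nat \<Rightarrow> real" where
  "necklace_w a r = (1 / real r) * (\<Sum>d\<in>{d. d dvd r}. real_of_int (moebius d) * real a ^ (r div d))"

definition seq_a :: "nat \<Rightarrow> nat \<Rightarrow> nat \<Rightarrow> nat \<Rightarrow> nat \<Rightarrow> real" where
  "seq_a p n m k i = necklace_w n (p ^ (m - i) * k) ^ (p ^ i) / (real p ^ i * necklace_w n (p ^ m * k))"

end

theory Submission
  imports Defs
begin

text \<open>
Let \<open>L(r) = r w(n,r) = \<Sum>\<^sub>d\<^sub>|\<^sub>r \<mu>(d) n^(r/d)\<close>, the number of primitive words of length \<open>r\<close> over
\<open>n\<close> letters. Two estimates suffice. First \<open>L(r) \<le> n^r\<close>: the term \<open>-n^(r/q)\<close> of the smallest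
prime \<open>q\<close> dividing \<open>r\<close> outweighs all positive terms, because these come from divisors \<open>d\<close>
with two distinct prime factors, so \<open>d \<ge> 2q\<close> and their sum is a geometric sum below \<open>n^(r/q)\<close>.
Second \<open>n^R \<le> 2 L(R)\<close> for \<open>R \<ge> 4\<close>, since all terms other than \<open>n^R\<close> are bounded by a
geometric sum up to \<open>n^(R/2)\<close>. With \<open>r = p^(m-i) k\<close> and \<open>P = p^s\<close> the ratio \<open>a\<^sub>i / a\<^sub>i\<^sub>-\<^sub>s\<close>
is \<open>p^-s (w(n,r)^P / w(n,Pr))^(p^(i-s))\<close>, and
\<open>w(n,r)^P / w(n,Pr) = P L(r)^P / (r^(P-1) L(Pr)) \<le> P n^(Pr) / (r^(P-1) n^(Pr) / 2)\<close>.
\<close>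

definition primitive_word_count :: "nat \<Rightarrow> nat \<Rightarrow> real" where
  "primitive_word_count a r = (\<Sum>d\<in>{d. d dvd r}. real_of_int (moebius d) * real a ^ (r div d))"

lemma necklace_w_eq: "necklace_w a r = primitive_word_count a r / real r"
  by (simp add: necklace_w_def primitive_word_count_def)

lemma moebius_1 [simp]: "moebius 1 = 1"
  by (simp add: moebius_def)

lemma moebius_prime: "prime q \<Longrightarrow> moebius q = -1"
  by (simp add: moebius_def squarefree_prime prime_factorization_prime)

lemma moebius_cases: "moebius d = 1 \<or> moebius d = 0 \<or> moebius d = -1"
  unfolding moebius_def by (cases "even (card (prime_factors d))") auto

lemma moebius_eq_1_imp_prime_product_dvd:
  assumes "moebius d = 1" "d \<noteq> 1"
  obtains q1 q2 where "prime q1" "prime q2" "q1 \<noteq> q2" "q1 * q2 dvd d"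
proof -
  have "squarefree d" and even_card: "(-1::int) ^ card (prime_factors d) = 1"
    using assms(1) unfolding moebius_def by (auto split: if_splits)
  then have "d > 0" using assms(2) by (cases "d = 0") auto
  obtain q where "prime q" "q dvd d" using prime_factor_nat[OF assms(2)] by blast
  then have "q \<in> prime_factors d" using \<open>d > 0\<close> by (auto simp: in_prime_factors_iff)
  then have "card (prime_factors d) \<noteq> 0" by auto
  moreover have "even (card (prime_factors d))"
    using even_card by (metis neg_one_odd_power one_neq_neg_one)
  ultimately have "card (prime_factors d) \<ge> 2" by presburger
  then have "\<not> (\<forall>q1\<in>prime_factors d. \<forall>q2\<in>prime_factors d. q1 = q2)"
    by (subst card_le_Suc0_iff_eq[symmetric]) auto
  then obtain q1 q2 where "q1 \<in> prime_factors d" "q2 \<in> prime_factors d" "q1 \<noteq> q2"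
    by blast
  then have "prime q1" "prime q2" "q1 dvd d" "q2 dvd d" "q1 \<noteq> q2"
    using \<open>d > 0\<close> by (auto simp: in_prime_factors_iff)
  moreover from this have "q1 * q2 dvd d"
    by (intro divides_mult) (auto simp: primes_coprime)
  ultimately show ?thesis using that by blast
qed

lemma primitive_word_count_eq_power_add:
  assumes "r > 0"
  shows "primitive_word_count a r =
           real a ^ r + (\<Sum>d\<in>{d. d dvd r \<and> d \<noteq> 1}. real_of_int (moebius d) * real a ^ (r div d))"
proof -
  have "{d. d dvd r} = insert 1 {d. d dvd r \<and> d \<noteq> 1}" by auto
  moreover have "finite {d. d dvd r \<and> d \<noteq> 1}"
    using assms by (auto intro: finite_subset[OF _ finite_divisors_nat])
  ultimately show ?thesis unfolding primitive_word_count_def using moebius_1 by simp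
qed

lemma sum_power_le:
  fixes x :: real
  assumes "x \<ge> 2"
  shows "(\<Sum>j=1..h. x ^ j) \<le> x ^ (h + 1) - x"
proof (induction h)
  case (Suc h)
  have "2 * x ^ (h + 1) \<le> x * x ^ (h + 1)"
    using assms by (intro mult_right_mono) auto
  then show ?case using Suc by simp
qed simp

lemma sum_divisor_quotients_le:
  fixes g :: "nat \<Rightarrow> real"
  assumes "r > 0" "E \<subseteq> {d. d dvd r}" "(\<lambda>d. r div d) ` E \<subseteq> J" "finite J"
    and "\<And>j. j \<in> J \<Longrightarrow> g j \<ge> 0"
  shows "(\<Sum>d\<in>E. g (r div d)) \<le> (\<Sum>j\<in>J. g j)"
proof -
  have "inj_on (\<lambda>d. r div d) E"
  proof (rule inj_onI)
    fix x y assume "x \<in> E" "y \<in> E" and eq: "r div x = r div y"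
    then have "x dvd r" "y dvd r" using assms(2) by auto
    then have "x * (r div x) = y * (r div x)" by (metis eq dvd_mult_div_cancel)
    moreover have "r div x \<noteq> 0" using \<open>x dvd r\<close> assms(1) by (simp add: dvd_div_eq_0_iff)
    ultimately show "x = y" by simp
  qed
  then have "(\<Sum>d\<in>E. g (r div d)) = (\<Sum>j\<in>(\<lambda>d. r div d) ` E. g j)"
    by (simp add: sum.reindex)
  also have "\<dots> \<le> (\<Sum>j\<in>J. g j)"
    using assms(3-5) by (intro sum_mono2) auto
  finally show ?thesis .
qed

lemma primitive_word_count_lower:
  assumes "r > 0" "n \<ge> 2"
  shows "real n ^ r - (real n ^ (r div 2 + 1) - real n) \<le> primitive_word_count n r"
proof -
  let ?D = "{d. d dvd r \<and> d \<noteq> 1}"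
  have "(\<Sum>d\<in>?D. real n ^ (r div d)) \<le> (\<Sum>j=1..r div 2. real n ^ j)"
  proof (rule sum_divisor_quotients_le[OF assms(1)])
    show "(\<lambda>d. r div d) ` ?D \<subseteq> {1..r div 2}"
    proof clarify
      fix d assume "d dvd r" "d \<noteq> 1"
      with assms(1) have "2 \<le> d" "d \<le> r" by (auto simp: dvd_imp_le dvd_pos_nat)
      with \<open>d dvd r\<close> show "r div d \<in> {1..r div 2}"
        by (auto intro: div_le_mono2 simp: div_greater_zero_iff)
    qed
  qed auto
  also have "\<dots> \<le> real n ^ (r div 2 + 1) - real n"
    using assms(2) by (intro sum_power_le) simp
  finally have "(\<Sum>d\<in>?D. real n ^ (r div d)) \<le> real n ^ (r div 2 + 1) - real n" .
  moreover have "(\<Sum>d\<in>?D. - (real n ^ (r div d)))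
                  \<le> (\<Sum>d\<in>?D. real_of_int (moebius d) * real n ^ (r div d))"
  proof (rule sum_mono)
    fix d
    show "- (real n ^ (r div d)) \<le> real_of_int (moebius d) * real n ^ (r div d)"
      using moebius_cases[of d] by auto
  qed
  ultimately show ?thesis using primitive_word_count_eq_power_add[OF assms(1)] by (simp add: sum_negf)
qed

lemma primitive_word_count_pos:
  assumes "r > 0" "n \<ge> 2"
  shows "primitive_word_count n r > 0"
proof -
  have "real n ^ (r div 2 + 1) \<le> real n ^ r"
    using assms by (intro power_increasing) auto
  then show ?thesis using primitive_word_count_lower[OF assms] assms by linarith
qed

lemma necklace_w_pos: "r > 0 \<Longrightarrow> n \<ge> 2 \<Longrightarrow> necklace_w n r > 0"
  by (simp add: necklace_w_eq primitive_word_count_pos)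

lemma power_le_twice_primitive_word_count:
  assumes "r \<ge> 4" "n \<ge> 2"
  shows "real n ^ r \<le> 2 * primitive_word_count n r"
proof -
  have "2 * real n ^ (r div 2 + 1) \<le> real n * real n ^ (r div 2 + 1)"
    using assms by (intro mult_right_mono) auto
  also have "\<dots> = real n ^ (r div 2 + 2)" by simp
  also have "\<dots> \<le> real n ^ r" using assms by (intro power_increasing) auto
  finally show ?thesis using primitive_word_count_lower[of r n] assms by linarith
qed

lemma sum_positive_moebius_terms_le:
  assumes "r > 0" "n \<ge> 2" "prime q" "q dvd r"
    and least: "\<And>q'. prime q' \<Longrightarrow> q' dvd r \<Longrightarrow> q \<le> q'"
  shows "(\<Sum>d\<in>{d. d dvd r \<and> d \<noteq> 1 \<and> moebius d = 1}. real n ^ (r div d)) \<le> real n ^ (r div q)"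
proof -
  let ?E = "{d. d dvd r \<and> d \<noteq> 1 \<and> moebius d = 1}"
  have "(\<Sum>d\<in>?E. real n ^ (r div d)) \<le> (\<Sum>j=1..r div q div 2. real n ^ j)"
  proof (rule sum_divisor_quotients_le[OF assms(1)])
    show "(\<lambda>d. r div d) ` ?E \<subseteq> {1..r div q div 2}"
    proof clarify
      fix d assume "d dvd r" "d \<noteq> 1" "moebius d = 1"
      then obtain q1 q2 where "prime q1" "prime q2" "q1 * q2 dvd d"
        by (blast elim: moebius_eq_1_imp_prime_product_dvd)
      moreover from this have "q \<le> q1" "2 \<le> q2"
        using least \<open>d dvd r\<close> by (meson dvd_mult_left dvd_trans prime_ge_2_nat)+
      moreover have "d > 0" using \<open>d dvd r\<close> assms(1) by (auto intro: dvd_pos_nat)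
      ultimately have "q * 2 \<le> d" by (metis dvd_imp_le mult_le_mono order_trans)
      then have "r div d \<le> r div (q * 2)" using assms(3) by (intro div_le_mono2) (auto simp: prime_gt_0_nat)
      moreover have "d \<le> r" using \<open>d dvd r\<close> assms(1) by (simp add: dvd_imp_le)
      ultimately show "r div d \<in> {1..r div q div 2}"
        using \<open>d > 0\<close> by (auto simp: div_mult2_eq div_greater_zero_iff Suc_le_eq)
    qed
  qed auto
  also have "\<dots> \<le> real n ^ (r div q div 2 + 1) - real n"
    using assms(2) by (intro sum_power_le) simp
  also have "\<dots> \<le> real n ^ (r div q)"
  proof -
    have "r div q \<ge> 1"
      using assms(1,3,4) by (auto simp: Suc_le_eq div_greater_zero_iff dvd_imp_le prime_gt_0_nat)
    then have "real n ^ (r div q div 2 + 1) \<le> real n ^ (r div q)"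
      using assms(2) by (intro power_increasing) auto
    then show ?thesis by simp
  qed
  finally show ?thesis .
qed

lemma primitive_word_count_le:
  assumes "r > 0" "n \<ge> 2"
  shows "primitive_word_count n r \<le> real n ^ r"
proof (cases "r = 1")
  case False
  define q where "q = (LEAST q. prime q \<and> q dvd r)"
  have "\<exists>q. prime q \<and> q dvd r" using prime_factor_nat[OF False] by blast
  then have q: "prime q" "q dvd r"
    unfolding q_def by (metis (mono_tags, lifting) LeastI_ex)+
  have least: "\<And>q'. prime q' \<Longrightarrow> q' dvd r \<Longrightarrow> q \<le> q'"
    unfolding q_def by (simp add: Least_le)
  let ?D = "{d. d dvd r \<and> d \<noteq> 1}"
  let ?f = "\<lambda>d. real_of_int (moebius d) * real n ^ (r div d)"
  let ?g = "\<lambda>d. if moebius d = 1 then real n ^ (r div d) else 0"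
  have fin: "finite ?D" using assms(1) by (auto intro: finite_subset[OF _ finite_divisors_nat])
  have "q \<in> ?D" using q by (auto simp: prime_gt_1_nat)
  then have "sum ?f ?D = sum ?f (?D - {q}) - real n ^ (r div q)"
    using fin by (simp add: sum.remove moebius_prime[OF q(1)])
  also have "sum ?f (?D - {q}) \<le> sum ?g (?D - {q})"
  proof (rule sum_mono)
    fix d
    show "?f d \<le> ?g d" using moebius_cases[of d] by auto
  qed
  also have "\<dots> = (\<Sum>d\<in>{d. d dvd r \<and> d \<noteq> 1 \<and> moebius d = 1}. real n ^ (r div d))"
    using fin moebius_prime[OF q(1)]
    by (subst sum.inter_filter[symmetric]) (auto intro!: sum.cong)
  also have "\<dots> \<le> real n ^ (r div q)"
    using sum_positive_moebius_terms_le[OF assms q least] .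
  finally show ?thesis using primitive_word_count_eq_power_add[OF assms(1)] by simp
qed (simp add: primitive_word_count_def moebius_def)

lemma necklace_w_power_div_le:
  assumes "n \<ge> 2" "r \<ge> 2" "P \<ge> 2"
  shows "necklace_w n r ^ P / necklace_w n (P * r) \<le> 2 * real P / real r ^ (P - 1)"
proof -
  let ?L = "primitive_word_count n"
  have "4 \<le> P * r" using mult_le_mono[OF assms(3,2)] by simp
  then have L_pos: "?L (P * r) > 0" using assms by (intro primitive_word_count_pos) auto
  have "0 \<le> ?L r" "?L r \<le> real n ^ r"
    using primitive_word_count_pos[of r n] primitive_word_count_le[of r n] assms by auto
  then have "?L r ^ P \<le> (real n ^ r) ^ P" by (rule power_mono[rotated])
  also have "\<dots> \<le> 2 * ?L (P * r)"
    using power_le_twice_primitive_word_count[OF \<open>4 \<le> P * r\<close> assms(1)]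
    by (simp add: power_mult[symmetric] mult.commute)
  finally have "?L r ^ P \<le> 2 * ?L (P * r)" .
  moreover have "real r ^ P = real r * real r ^ (P - 1)"
    using assms(3) by (simp add: power_eq_if)
  ultimately show ?thesis
    using L_pos assms(2) by (simp add: necklace_w_eq power_divide field_simps) (simp add: mult_left_mono)
qed

lemma seq_a_div_seq_a:
  assumes "p > 0" "n \<ge> 2" "k > 0" "s \<le> i" "i \<le> m"
  shows "seq_a p n m k i / seq_a p n m k (i - s) =
           (1 / real p ^ s) *
           (necklace_w n (p ^ (m - i) * k) ^ p ^ s / necklace_w n (p ^ s * (p ^ (m - i) * k)))
             ^ p ^ (i - s)"
proof -
  have i: "i = s + (i - s)" and m: "m - (i - s) = s + (m - i)" using assms(4,5) by auto
  have "necklace_w n (p ^ s * (p ^ (m - i) * k)) > 0" "necklace_w n (p ^ m * k) > 0"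
    using assms by (auto intro!: necklace_w_pos)
  then show ?thesis
    unfolding seq_a_def m by (subst (1 3) i)
      (simp add: power_add power_mult power_divide field_simps mult.assoc assms(1))
qed

theorem lemma2p3:
  fixes p n m k i s :: nat
  assumes "prime p" and "n \<ge> 2" and "k \<ge> 2" and "\<not> p dvd k"
    and "0 < s" and "s \<le> i" and "i \<le> m"
  shows "seq_a p n m k i / seq_a p n m k (i - s)
         \<le> (1 / real p ^ s) *
            (2 * real p ^ s / (real (p ^ (m - i) * k)) ^ (p ^ s - 1)) ^ (p ^ (i - s))"
proof -
  define r where "r = p ^ (m - i) * k"
  define X where "X = necklace_w n r ^ p ^ s / necklace_w n (p ^ s * r)"
  have "p \<ge> 2" using assms(1) by (rule prime_ge_2_nat)
  have "k \<le> r" using \<open>p \<ge> 2\<close> mult_le_mono1[of 1 "p ^ (m - i)" k] unfolding r_def by simp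
  then have "r \<ge> 2" using assms(3) by simp
  have "p ^ s \<ge> 2" using \<open>p \<ge> 2\<close> assms(5)
    by (simp add: le_trans[OF _ power_increasing[of 1 s p]])
  have "seq_a p n m k i / seq_a p n m k (i - s) = (1 / real p ^ s) * X ^ p ^ (i - s)"
    unfolding X_def r_def using \<open>p \<ge> 2\<close> assms by (intro seq_a_div_seq_a) auto
  also have "X ^ p ^ (i - s) \<le> (2 * real (p ^ s) / real r ^ (p ^ s - 1)) ^ p ^ (i - s)"
  proof (rule power_mono)
    show "X \<le> 2 * real (p ^ s) / real r ^ (p ^ s - 1)"
      unfolding X_def using assms(2) \<open>r \<ge> 2\<close> \<open>p ^ s \<ge> 2\<close> by (rule necklace_w_power_div_le)
    show "0 \<le> X"
      unfolding X_def using assms(2) \<open>r \<ge> 2\<close> \<open>p \<ge> 2\<close> by (simp add: less_imp_le necklace_w_pos)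
  qed
  finally show ?thesis by (simp add: r_def divide_right_mono)
qed

end
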